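(* Let $\mathcal U=(V,\tilde V,W,\tilde W,R)$ be an ordered gradient space and $V_0=\{u\in V: u\le v\text{ for some }v\in V_+\}$. Then $V_0$ is a lattice (with the order $\le$) if and only if $V_+$ is a lattice. In this case, for all $u_1,u_2\in V_+$, the $V_+$-least upper bound $\max(u_1,u_2)$ satisfies $\max(u_1,u_2)\le v$ for every $v\in V$ with $v\ge u_1$ and $v\ge u_2$, and the $V_+$-greatest lower bound $\min(u_1,u_2)$ satisfies $\min(u_1,u_2)\ge v$ for every $v\in V$ with $v\le u_1$ and $v\le u_2$.
   Context: A gradient space $\mathcal U=(V,\tilde V,W,\tilde W,R)$ consists of vector spaces $\tilde V,\tilde W$ over $\mathbf R$ or $\mathbf C$, a relation $R\subseteq\tilde V\times\tilde W$ closed under addition and under multiplication by positive scalars, and linear subspaces $V\subseteq\tilde V$, $W\subseteq\tilde W$ such that $V$ is a reflexive Banach space (norm $\|\cdot\|_V$), $W$ is a reflexive strictly convex Banach space, for every $(u,g)\in R\cap(V\times W)$ there is $g'\in W$ with $(-u,g')\in R$, and $R\cap(V\times W)$ is closed in $V\times W$. A linear preorder on $\tilde V$ is a relation $\le$ with: $a\le a$; $a\le b,\ b\le c\Rightarrow a\le c$; $b\le c\Rightarrow a+b\le a+c$; $a\le b,\ \alpha\in[0,\infty)\Rightarrow\alpha a\le\alpha b$. A preordered gradient space is a gradient space with a linear preorder $\le$ on $\tilde V$ such that if $u_i\in V$, $\psi\in\tilde V$, $u_i\le\psi$ for all $i$ and $u_i\to u$ in $V$, then $u\le\psi$. An ordered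 gradient space is a preordered gradient space such that $V$ is strictly convex and, for $u,v\in V$, $0\le u\le v$ implies $\|u\|_V\le\|v\|_V$ (then $\le$ is a partial order on $V$). Let $V_+=\{v\in V:v\ge0\}$. For $u_1,u_2\in V_+$: $\max(u_1,u_2)$ is the unique element $u$ of $\{u\in V:u\ge u_1,\ u\ge u_2\}$ of least $V$-norm; $\min(u_1,u_2)$ is the unique element of $\{v\in V:0\le v\le u_1,\ v\le u_2\}$ minimizing $\|\max(u_1,u_2)-v\|_V$. A subset $A\subseteq V$ is a lattice if every pair of elements of $A$ has a least upper bound and a greatest lower bound within $A$ (with respect to $\le$); $V_+$-least upper bounds and $V_+$-greatest lower bounds mean least upper / greatest lower bounds taken within $V_+$. *)

theory Defs
  imports "HOL-Analysis.Analysis"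
begin

definition reflexive_space :: "'a::real_normed_vector itself \<Rightarrow> bool" where
  "reflexive_space _ \<longleftrightarrow>
     (\<forall>\<Phi> :: ('a \<Rightarrow>\<^sub>L real) \<Rightarrow>\<^sub>L real. \<exists>x::'a. \<forall>f. blinfun_apply \<Phi> f = blinfun_apply f x)"

definition strictly_convex_space :: "'a::real_normed_vector itself \<Rightarrow> bool" where
  "strictly_convex_space _ \<longleftrightarrow>
     (\<forall>x y :: 'a. norm x = 1 \<and> norm y = 1 \<and> x \<noteq> y \<longrightarrow> norm ((1/2) *\<^sub>R (x + y)) < 1)"

(* Gradient space (V, Vt, W, Wt, R):  V and W are given as Banach-space types 'v, 'w,
   embedded linearly and injectively into the vector spaces 'vt, 'wt by iV, iW. *)
definition gradient_space ::
  "('v::banach \<Rightarrow> 'vt::real_vector) \<Rightarrow> ('w::banach \<Rightarrow> 'wt::real_vector)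
   \<Rightarrow> ('vt \<times> 'wt) set \<Rightarrow> bool" where
  "gradient_space iV iW R \<longleftrightarrow>
     linear iV \<and> inj iV \<and> linear iW \<and> inj iW \<and>
     (\<forall>a b c d. (a, b) \<in> R \<and> (c, d) \<in> R \<longrightarrow> (a + c, b + d) \<in> R) \<and>
     (\<forall>t a b. t > 0 \<and> (a, b) \<in> R \<longrightarrow> (t *\<^sub>R a, t *\<^sub>R b) \<in> R) \<and>
     reflexive_space TYPE('v) \<and>
     reflexive_space TYPE('w) \<and> strictly_convex_space TYPE('w) \<and>
     (\<forall>u g. (iV u, iW g) \<in> R \<longrightarrow> (\<exists>g'. (iV (- u), iW g') \<in> R)) \<and>
     closed {(u, g). (iV u, iW g) \<in> R}"

definition linear_preorder :: "('a::real_vector \<Rightarrow> 'a \<Rightarrow> bool) \<Rightarrow> bool" where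
  "linear_preorder le \<longleftrightarrow>
     (\<forall>a. le a a) \<and>
     (\<forall>a b c. le a b \<and> le b c \<longrightarrow> le a c) \<and>
     (\<forall>a b c. le b c \<longrightarrow> le (a + b) (a + c)) \<and>
     (\<forall>a b (\<alpha>::real). le a b \<and> \<alpha> \<ge> 0 \<longrightarrow> le (\<alpha> *\<^sub>R a) (\<alpha> *\<^sub>R b))"

definition preordered_gradient_space ::
  "('v::banach \<Rightarrow> 'vt::real_vector) \<Rightarrow> ('w::banach \<Rightarrow> 'wt::real_vector)
   \<Rightarrow> ('vt \<times> 'wt) set \<Rightarrow> ('vt \<Rightarrow> 'vt \<Rightarrow> bool) \<Rightarrow> bool" where
  "preordered_gradient_space iV iW R le \<longleftrightarrow>
     gradient_space iV iW R \<and> linear_preorder le \<and>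
     (\<forall>(u::nat \<Rightarrow> 'v) u0 \<psi>. (\<forall>i. le (iV (u i)) \<psi>) \<and> u \<longlonglongrightarrow> u0 \<longrightarrow> le (iV u0) \<psi>)"

definition ordered_gradient_space ::
  "('v::banach \<Rightarrow> 'vt::real_vector) \<Rightarrow> ('w::banach \<Rightarrow> 'wt::real_vector)
   \<Rightarrow> ('vt \<times> 'wt) set \<Rightarrow> ('vt \<Rightarrow> 'vt \<Rightarrow> bool) \<Rightarrow> bool" where
  "ordered_gradient_space iV iW R le \<longleftrightarrow>
     preordered_gradient_space iV iW R le \<and> strictly_convex_space TYPE('v) \<and>
     (\<forall>u v. le (iV 0) (iV u) \<and> le (iV u) (iV v) \<longrightarrow> norm u \<le> norm v)"

definition leV :: "('v \<Rightarrow> 'vt) \<Rightarrow> ('vt \<Rightarrow> 'vt \<Rightarrow> bool) \<Rightarrow> 'v \<Rightarrow> 'v \<Rightarrow> bool" where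
  "leV iV le u v \<longleftrightarrow> le (iV u) (iV v)"

definition Vplus :: "('v::zero \<Rightarrow> 'vt) \<Rightarrow> ('vt \<Rightarrow> 'vt \<Rightarrow> bool) \<Rightarrow> 'v set" where
  "Vplus iV le = {v. leV iV le 0 v}"

definition Vzero :: "('v::zero \<Rightarrow> 'vt) \<Rightarrow> ('vt \<Rightarrow> 'vt \<Rightarrow> bool) \<Rightarrow> 'v set" where
  "Vzero iV le = {u. \<exists>v \<in> Vplus iV le. leV iV le u v}"

definition is_lub_in :: "'a set \<Rightarrow> ('a \<Rightarrow> 'a \<Rightarrow> bool) \<Rightarrow> 'a \<Rightarrow> 'a \<Rightarrow> 'a \<Rightarrow> bool" where
  "is_lub_in A le x y z \<longleftrightarrow>
     z \<in> A \<and> le x z \<and> le y z \<and> (\<forall>w\<in>A. le x w \<and> le y w \<longrightarrow> le z w)"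

definition is_glb_in :: "'a set \<Rightarrow> ('a \<Rightarrow> 'a \<Rightarrow> bool) \<Rightarrow> 'a \<Rightarrow> 'a \<Rightarrow> 'a \<Rightarrow> bool" where
  "is_glb_in A le x y z \<longleftrightarrow>
     z \<in> A \<and> le z x \<and> le z y \<and> (\<forall>w\<in>A. le w x \<and> le w y \<longrightarrow> le w z)"

definition is_lattice :: "'a set \<Rightarrow> ('a \<Rightarrow> 'a \<Rightarrow> bool) \<Rightarrow> bool" where
  "is_lattice A le \<longleftrightarrow>
     (\<forall>x\<in>A. \<forall>y\<in>A. (\<exists>z. is_lub_in A le x y z) \<and> (\<exists>z. is_glb_in A le x y z))"

definition maxV :: "('v::real_normed_vector \<Rightarrow> 'vt) \<Rightarrow> ('vt \<Rightarrow> 'vt \<Rightarrow> bool) \<Rightarrow> 'v \<Rightarrow> 'v \<Rightarrow> 'v" where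
  "maxV iV le u1 u2 =
     (THE u. leV iV le u1 u \<and> leV iV le u2 u \<and>
        (\<forall>w. leV iV le u1 w \<and> leV iV le u2 w \<longrightarrow> norm u \<le> norm w))"

definition minV :: "('v::real_normed_vector \<Rightarrow> 'vt) \<Rightarrow> ('vt \<Rightarrow> 'vt \<Rightarrow> bool) \<Rightarrow> 'v \<Rightarrow> 'v \<Rightarrow> 'v" where
  "minV iV le u1 u2 =
     (THE v. leV iV le 0 v \<and> leV iV le v u1 \<and> leV iV le v u2 \<and>
        (\<forall>w. leV iV le 0 w \<and> leV iV le w u1 \<and> leV iV le w u2 \<longrightarrow>
             norm (maxV iV le u1 u2 - v) \<le> norm (maxV iV le u1 u2 - w)))"

end

theory Submission
  imports Defs
begin

text \<open>
  Only the induced linear preorder on \<open>V\<close> matters. Translation by a positive vector moves any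
  two elements of \<open>V\<^sub>0\<close> into \<open>V\<^sub>+\<close>, which is upward closed; hence a lattice structure on \<open>V\<^sub>+\<close>
  yields least upper bounds in all of \<open>V\<close>, and the reflection \<open>v \<mapsto> x + y - v\<close> turns them into
  greatest lower bounds. Conversely, in \<open>V\<^sub>0\<close> the infimum of \<open>x, y \<in> V\<^sub>+\<close> is recovered as
  \<open>sup (inf x y) 0\<close>. Finally, monotonicity of the norm on \<open>V\<^sub>+\<close> makes the least upper bound
  an upper bound of least norm, and strict convexity makes that minimiser unique; the same
  argument applied to \<open>max - v\<close> identifies \<open>min\<close>.
\<close>

lemma strictly_convex_midpoint_norm_less:
  fixes x y :: "'v::real_normed_vector"
  assumes "strictly_convex_space TYPE('v)" and "norm x = norm y" and "x \<noteq> y"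
  shows "norm ((1/2) *\<^sub>R (x + y)) < norm x"
proof -
  define r where "r = norm x"
  have "r > 0"
    using assms(2,3) r_def by (metis norm_eq_zero norm_ge_zero order_less_le)
  have "norm ((1/2) *\<^sub>R ((1/r) *\<^sub>R x + (1/r) *\<^sub>R y)) < 1"
    using assms \<open>r > 0\<close> r_def unfolding strictly_convex_space_def by auto
  moreover have "(1/2) *\<^sub>R ((1/r) *\<^sub>R x + (1/r) *\<^sub>R y) = (1/r) *\<^sub>R ((1/2) *\<^sub>R (x + y))"
    by (simp add: algebra_simps)
  ultimately have "(1/r) * norm ((1/2) *\<^sub>R (x + y)) < 1"
    using \<open>r > 0\<close> by simp
  then show ?thesis
    using \<open>r > 0\<close> r_def by (simp add: field_simps)
qed

lemma is_lub_in_subset: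
  "is_lub_in A le x y z \<Longrightarrow> B \<subseteq> A \<Longrightarrow> z \<in> B \<Longrightarrow> is_lub_in B le x y z"
  unfolding is_lub_in_def by blast

lemma is_glb_in_subset:
  "is_glb_in A le x y z \<Longrightarrow> B \<subseteq> A \<Longrightarrow> z \<in> B \<Longrightarrow> is_glb_in B le x y z"
  unfolding is_glb_in_def by blast

lemma is_lub_in_UNIV_if_upward_closed:
  assumes "\<And>v. le x v \<Longrightarrow> v \<in> A" and "is_lub_in A le x y z"
  shows "is_lub_in UNIV le x y z"
  using assms unfolding is_lub_in_def by blast

locale linear_preorder_space =
  fixes le :: "'v::real_vector \<Rightarrow> 'v \<Rightarrow> bool"
  assumes le_refl: "le a a"
    and le_trans: "le a b \<Longrightarrow> le b c \<Longrightarrow> le a c"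
    and le_add_right: "le a b \<Longrightarrow> le (a + c) (b + c)"
    and le_scaleR: "le a b \<Longrightarrow> 0 \<le> t \<Longrightarrow> le (t *\<^sub>R a) (t *\<^sub>R b)"
begin

lemma le_iff_diff_nonneg: "le a b \<longleftrightarrow> le 0 (b - a)"
  using le_add_right[of a b "- a"] le_add_right[of 0 "b - a" a] by auto

lemma le_add_mono: "le a b \<Longrightarrow> le c d \<Longrightarrow> le (a + c) (b + d)"
  using le_add_right[of a b c] le_add_right[of c d b] le_trans by (metis add.commute)

lemma le_diff_antimono: "le a b \<Longrightarrow> le (c - b) (c - a)"
  using le_add_right[of a b "c - a - b"] by (simp add: algebra_simps)

lemma le_midpoint_lower: "le a x \<Longrightarrow> le a y \<Longrightarrow> le a ((1/2) *\<^sub>R (x + y))"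
  using le_add_mono[OF le_scaleR[of a x "1/2"] le_scaleR[of a y "1/2"]]
  by (simp add: scaleR_add_right[symmetric] scaleR_add_left[symmetric])

lemma le_midpoint_upper: "le x a \<Longrightarrow> le y a \<Longrightarrow> le ((1/2) *\<^sub>R (x + y)) a"
  using le_add_mono[OF le_scaleR[of x a "1/2"] le_scaleR[of y a "1/2"]]
  by (simp add: scaleR_add_right[symmetric] scaleR_add_left[symmetric])

definition positive_cone :: "'v set" where
  "positive_cone = {v. le 0 v}"

definition below_positive :: "'v set" where
  "below_positive = {u. \<exists>v\<in>positive_cone. le u v}"

lemma positive_cone_upward_closed: "a \<in> positive_cone \<Longrightarrow> le a b \<Longrightarrow> b \<in> positive_cone"
  unfolding positive_cone_def using le_trans by blast

lemma below_positive_downward_closed: "b \<in> below_positive \<Longrightarrow> le a b \<Longrightarrow> a \<in> below_positive"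
  unfolding below_positive_def using le_trans by blast

lemma positive_cone_subset_below_positive: "positive_cone \<subseteq> below_positive"
  unfolding below_positive_def using le_refl by blast

lemma is_lub_in_UNIV_translate:
  assumes "is_lub_in UNIV le x y z"
  shows "is_lub_in UNIV le (x + c) (y + c) (z + c)"
  unfolding is_lub_in_def
proof (intro conjI ballI impI UNIV_I)
  show "le (x + c) (z + c)" "le (y + c) (z + c)"
    using assms le_add_right unfolding is_lub_in_def by blast+
  fix w assume "le (x + c) w \<and> le (y + c) w"
  then have "le x (w - c)" "le y (w - c)"
    using le_add_right[of "x + c" w "- c"] le_add_right[of "y + c" w "- c"] by auto
  then have "le z (w - c)"
    using assms unfolding is_lub_in_def by blast
  then show "le (z + c) w"
    using le_add_right[of z "w - c" c] by simp
qed

lemma is_glb_in_UNIV_reflect: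
  assumes "is_lub_in UNIV le x y z"
  shows "is_glb_in UNIV le x y (x + y - z)"
  unfolding is_glb_in_def
proof (intro conjI ballI impI UNIV_I)
  have "le x z" "le y z" "\<And>v. le x v \<Longrightarrow> le y v \<Longrightarrow> le z v"
    using assms unfolding is_lub_in_def by auto
  show "le (x + y - z) x" "le (x + y - z) y"
    using le_diff_antimono[OF \<open>le y z\<close>, of "x + y"] le_diff_antimono[OF \<open>le x z\<close>, of "x + y"]
    by simp_all
  fix w assume "le w x \<and> le w y"
  then have "le y (x + y - w)" "le x (x + y - w)"
    using le_diff_antimono[of w x "x + y"] le_diff_antimono[of w y "x + y"] by auto
  then have "le z (x + y - w)"
    using \<open>\<And>v. le x v \<Longrightarrow> le y v \<Longrightarrow> le z v\<close> by blast
  then show "le w (x + y - z)"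
    using le_diff_antimono[of z "x + y - w" "x + y"] by simp
qed

lemma positive_cone_lub_in_UNIV:
  assumes "is_lattice positive_cone le" and "x \<in> positive_cone" and "y \<in> positive_cone"
  obtains z where "z \<in> positive_cone" and "is_lub_in UNIV le x y z"
proof -
  obtain z where z: "is_lub_in positive_cone le x y z"
    using assms unfolding is_lattice_def by blast
  have "is_lub_in UNIV le x y z"
    using is_lub_in_UNIV_if_upward_closed[OF positive_cone_upward_closed[OF assms(2)] z] .
  moreover have "z \<in> positive_cone"
    using z unfolding is_lub_in_def by blast
  ultimately show thesis
    using that by blast
qed

lemma below_positive_lub_in_UNIV:
  assumes "is_lattice positive_cone le" and "x \<in> below_positive" and "y \<in> below_positive"
  obtains z where "is_lub_in UNIV le x y z"
proof -
  obtain p q where "le 0 p" "le x p" "le 0 q" "le y q"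
    using assms(2,3) unfolding below_positive_def positive_cone_def by blast
  define c where "c = (p - x) + (q - y)"
  have "le p (x + c)" "le q (y + c)"
    using le_add_right[of 0 "q - y" p] le_add_right[of 0 "p - x" q] \<open>le x p\<close> \<open>le y q\<close>
    unfolding c_def le_iff_diff_nonneg[of x p] le_iff_diff_nonneg[of y q]
    by (simp_all add: algebra_simps)
  then have "x + c \<in> positive_cone" "y + c \<in> positive_cone"
    using \<open>le 0 p\<close> \<open>le 0 q\<close> le_trans unfolding positive_cone_def by blast+
  then obtain z where "is_lub_in UNIV le (x + c) (y + c) z"
    using positive_cone_lub_in_UNIV[OF assms(1)] by blast
  then have "is_lub_in UNIV le x y (z + - c)"
    using is_lub_in_UNIV_translate[of "x + c" "y + c" z "- c"] by simp
  then show thesis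
    using that by blast
qed

lemma lattice_below_positive_if_lattice_positive_cone:
  assumes "is_lattice positive_cone le"
  shows "is_lattice below_positive le"
  unfolding is_lattice_def
proof (intro ballI conjI)
  fix x y assume x: "x \<in> below_positive" and y: "y \<in> below_positive"
  then obtain z where z: "is_lub_in UNIV le x y z"
    using below_positive_lub_in_UNIV[OF assms] by blast
  obtain p q where "le 0 p" "le x p" "le 0 q" "le y q"
    using x y unfolding below_positive_def positive_cone_def by blast
  then have "le x (p + q)" "le y (p + q)" "p + q \<in> positive_cone"
    using le_add_mono[of x p 0 q] le_add_mono[of 0 p y q] le_add_mono[of 0 p 0 q]
    unfolding positive_cone_def by simp_all
  then have "le z (p + q)"
    using z unfolding is_lub_in_def by blast
  then have "z \<in> below_positive"
    using \<open>p + q \<in> positive_cone\<close> unfolding below_positive_def by blast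
  then show "\<exists>z. is_lub_in below_positive le x y z"
    using is_lub_in_subset[OF z subset_UNIV] by blast
  have glb: "is_glb_in UNIV le x y (x + y - z)"
    using is_glb_in_UNIV_reflect[OF z] .
  then have "x + y - z \<in> below_positive"
    using below_positive_downward_closed[OF x] unfolding is_glb_in_def by blast
  then show "\<exists>z. is_glb_in below_positive le x y z"
    using is_glb_in_subset[OF glb subset_UNIV] by blast
qed

lemma lattice_positive_cone_if_lattice_below_positive:
  assumes lattice: "is_lattice below_positive le"
  shows "is_lattice positive_cone le"
  unfolding is_lattice_def
proof (intro ballI conjI)
  fix x y assume x: "x \<in> positive_cone" and y: "y \<in> positive_cone"
  then have xy: "x \<in> below_positive" "y \<in> below_positive"
    using positive_cone_subset_below_positive by auto
  obtain z where z: "is_lub_in below_positive le x y z"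
    using lattice xy unfolding is_lattice_def by blast
  then have "z \<in> positive_cone"
    using positive_cone_upward_closed[OF x] unfolding is_lub_in_def by blast
  then show "\<exists>z. is_lub_in positive_cone le x y z"
    using is_lub_in_subset[OF z positive_cone_subset_below_positive] by blast
  obtain g where g: "is_glb_in below_positive le x y g"
    using lattice xy unfolding is_lattice_def by blast
  have "0 \<in> below_positive"
    using positive_cone_subset_below_positive le_refl[of 0] unfolding positive_cone_def by blast
  then obtain h where h: "is_lub_in below_positive le g 0 h"
    using lattice g unfolding is_lattice_def is_glb_in_def by blast
  have "le g h" "le 0 h" "\<And>w. w \<in> below_positive \<Longrightarrow> le g w \<Longrightarrow> le 0 w \<Longrightarrow> le h w"
    using h unfolding is_lub_in_def by auto
  moreover have "le g x" "le g y"
    using g unfolding is_glb_in_def by auto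
  ultimately have "le h x" "le h y" "h \<in> positive_cone"
    using xy x y unfolding positive_cone_def by auto
  moreover have "le w h" if "w \<in> positive_cone" "le w x" "le w y" for w
  proof -
    have "le w g"
      using g that positive_cone_subset_below_positive unfolding is_glb_in_def by blast
    then show "le w h"
      using le_trans \<open>le g h\<close> by blast
  qed
  ultimately show "\<exists>z. is_glb_in positive_cone le x y z"
    unfolding is_glb_in_def by blast
qed

lemma lattice_below_positive_iff:
  "is_lattice below_positive le \<longleftrightarrow> is_lattice positive_cone le"
  using lattice_below_positive_if_lattice_positive_cone
    lattice_positive_cone_if_lattice_below_positive by blast

end

locale strictly_convex_ordered_space = linear_preorder_space le
  for le :: "'v::real_normed_vector \<Rightarrow> 'v \<Rightarrow> bool" +
  assumes norm_mono: "le 0 u \<Longrightarrow> le u v \<Longrightarrow> norm u \<le> norm v"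
    and strictly_convex: "strictly_convex_space TYPE('v)"
begin

definition least_norm_upper_bound :: "'v \<Rightarrow> 'v \<Rightarrow> 'v" where
  "least_norm_upper_bound u1 u2 =
     (THE u. le u1 u \<and> le u2 u \<and> (\<forall>w. le u1 w \<and> le u2 w \<longrightarrow> norm u \<le> norm w))"

definition nearest_lower_bound :: "'v \<Rightarrow> 'v \<Rightarrow> 'v" where
  "nearest_lower_bound u1 u2 =
     (THE v. le 0 v \<and> le v u1 \<and> le v u2 \<and>
        (\<forall>w. le 0 w \<and> le w u1 \<and> le w u2 \<longrightarrow>
             norm (least_norm_upper_bound u1 u2 - v) \<le> norm (least_norm_upper_bound u1 u2 - w)))"

lemma least_norm_upper_bound_eq_lub:
  assumes "le 0 u1" and lub: "is_lub_in UNIV le u1 u2 z"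
  shows "least_norm_upper_bound u1 u2 = z"
  unfolding least_norm_upper_bound_def
proof (rule the_equality)
  have z: "le u1 z" "le u2 z" "\<And>v. le u1 v \<Longrightarrow> le u2 v \<Longrightarrow> le z v"
    using lub unfolding is_lub_in_def by auto
  have "le 0 z"
    using assms(1) z(1) le_trans by blast
  then show "le u1 z \<and> le u2 z \<and> (\<forall>w. le u1 w \<and> le u2 w \<longrightarrow> norm z \<le> norm w)"
    using z norm_mono by blast
  fix u assume u: "le u1 u \<and> le u2 u \<and> (\<forall>w. le u1 w \<and> le u2 w \<longrightarrow> norm u \<le> norm w)"
  have "norm u = norm z"
    using u z norm_mono[OF \<open>le 0 z\<close>] by (meson order_antisym)
  show "u = z"
  proof (rule ccontr)
    assume "u \<noteq> z"
    have "norm u \<le> norm ((1/2) *\<^sub>R (u + z))"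
      using u z le_midpoint_lower by blast
    then show False
      using strictly_convex_midpoint_norm_less[OF strictly_convex \<open>norm u = norm z\<close> \<open>u \<noteq> z\<close>]
      by simp
  qed
qed

lemma nearest_lower_bound_eq_glb:
  assumes "le 0 u1" and lub: "is_lub_in UNIV le u1 u2 z"
    and glb: "is_glb_in UNIV le u1 u2 g" and "le 0 g"
  shows "nearest_lower_bound u1 u2 = g"
  unfolding nearest_lower_bound_def least_norm_upper_bound_eq_lub[OF assms(1) lub]
proof (rule the_equality)
  have g: "le g u1" "le g u2" "\<And>w. le w u1 \<Longrightarrow> le w u2 \<Longrightarrow> le w g"
    using glb unfolding is_glb_in_def by auto
  have "le u1 z"
    using lub unfolding is_lub_in_def by blast
  then have "le 0 (z - g)"
    using le_trans[OF g(1)] le_iff_diff_nonneg[THEN iffD1] by blast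
  have nearest: "norm (z - g) \<le> norm (z - w)" if "le w u1" "le w u2" for w
    using norm_mono[OF \<open>le 0 (z - g)\<close> le_diff_antimono[OF g(3)[OF that]]] .
  then show "le 0 g \<and> le g u1 \<and> le g u2 \<and>
      (\<forall>w. le 0 w \<and> le w u1 \<and> le w u2 \<longrightarrow> norm (z - g) \<le> norm (z - w))"
    using \<open>le 0 g\<close> g by blast
  fix v assume v: "le 0 v \<and> le v u1 \<and> le v u2 \<and>
      (\<forall>w. le 0 w \<and> le w u1 \<and> le w u2 \<longrightarrow> norm (z - v) \<le> norm (z - w))"
  have "norm (z - v) = norm (z - g)"
    using v \<open>le 0 g\<close> g nearest[of v] by (meson order_antisym)
  show "v = g"
  proof (rule ccontr)
    assume "v \<noteq> g"
    then have "z - v \<noteq> z - g"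
      by simp
    define m where "m = (1/2) *\<^sub>R (v + g)"
    have "le 0 m" "le m u1" "le m u2"
      unfolding m_def using v g(1,2) \<open>le 0 g\<close>
      by (auto intro: le_midpoint_lower le_midpoint_upper)
    then have "norm (z - v) \<le> norm (z - m)"
      using v by blast
    moreover have "z - m = (1/2) *\<^sub>R ((z - v) + (z - g))"
      unfolding m_def by (simp add: algebra_simps scaleR_add_left[symmetric])
    ultimately show False
      using strictly_convex_midpoint_norm_less[OF strictly_convex
          \<open>norm (z - v) = norm (z - g)\<close> \<open>z - v \<noteq> z - g\<close>]
      by simp
  qed
qed

lemma positive_cone_lub_glb_in_UNIV:
  assumes "is_lattice positive_cone le" and "u1 \<in> positive_cone" and "u2 \<in> positive_cone"
  shows "is_lub_in UNIV le u1 u2 (least_norm_upper_bound u1 u2)"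
    and "is_glb_in UNIV le u1 u2 (nearest_lower_bound u1 u2)"
    and "least_norm_upper_bound u1 u2 \<in> positive_cone"
    and "nearest_lower_bound u1 u2 \<in> positive_cone"
proof -
  obtain z where z: "z \<in> positive_cone" "is_lub_in UNIV le u1 u2 z"
    using positive_cone_lub_in_UNIV[OF assms] by blast
  have glb: "is_glb_in UNIV le u1 u2 (u1 + u2 - z)"
    using is_glb_in_UNIV_reflect[OF z(2)] .
  then have "u1 + u2 - z \<in> positive_cone"
    using assms(2,3) unfolding is_glb_in_def positive_cone_def by blast
  moreover have "le 0 u1"
    using assms(2) unfolding positive_cone_def by simp
  ultimately show "is_lub_in UNIV le u1 u2 (least_norm_upper_bound u1 u2)"
    and "is_glb_in UNIV le u1 u2 (nearest_lower_bound u1 u2)"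
    and "least_norm_upper_bound u1 u2 \<in> positive_cone"
    and "nearest_lower_bound u1 u2 \<in> positive_cone"
    using z glb least_norm_upper_bound_eq_lub nearest_lower_bound_eq_glb
    unfolding positive_cone_def by auto
qed

end

lemma ordered_gradient_space_induced_order:
  fixes iV :: "'v::banach \<Rightarrow> 'vt::real_vector"
  assumes "ordered_gradient_space iV iW R le"
  shows "strictly_convex_ordered_space (leV iV le)"
proof -
  have lin: "linear iV" and pre: "linear_preorder le"
    using assms unfolding ordered_gradient_space_def preordered_gradient_space_def
      gradient_space_def by auto
  show ?thesis
  proof (unfold_locales, unfold leV_def)
    fix a b c u v :: 'v and t :: real
    show "le (iV a) (iV a)"
      using pre unfolding linear_preorder_def by blast
    show "le (iV a) (iV b) \<Longrightarrow> le (iV b) (iV c) \<Longrightarrow> le (iV a) (iV c)"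
      using pre unfolding linear_preorder_def by blast
    show "le (iV (a + c)) (iV (b + c))" if "le (iV a) (iV b)"
    proof -
      have "le (iV c + iV a) (iV c + iV b)"
        using pre that unfolding linear_preorder_def by blast
      then show ?thesis
        by (simp add: linear_add[OF lin] add.commute)
    qed
    show "le (iV (t *\<^sub>R a)) (iV (t *\<^sub>R b))" if "le (iV a) (iV b)" and "0 \<le> t"
      using pre that unfolding linear_preorder_def linear_scale[OF lin] by blast
    show "le (iV 0) (iV u) \<Longrightarrow> le (iV u) (iV v) \<Longrightarrow> norm u \<le> norm v"
      using assms unfolding ordered_gradient_space_def by blast
    show "strictly_convex_space TYPE('v)"
      using assms unfolding ordered_gradient_space_def by blast
  qed
qed

theorem mainTheorem18:
  fixes iV :: "'v::banach \<Rightarrow> 'vt::real_vector"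
    and iW :: "'w::banach \<Rightarrow> 'wt::real_vector"
    and R :: "('vt \<times> 'wt) set"
    and le :: "'vt \<Rightarrow> 'vt \<Rightarrow> bool"
  assumes "ordered_gradient_space iV iW R le"
  shows "(is_lattice (Vzero iV le) (leV iV le) \<longleftrightarrow> is_lattice (Vplus iV le) (leV iV le)) \<and>
         (is_lattice (Vplus iV le) (leV iV le) \<longrightarrow>
            (\<forall>u1\<in>Vplus iV le. \<forall>u2\<in>Vplus iV le.
               is_lub_in (Vplus iV le) (leV iV le) u1 u2 (maxV iV le u1 u2) \<and>
               (\<forall>v. leV iV le u1 v \<and> leV iV le u2 v \<longrightarrow> leV iV le (maxV iV le u1 u2) v) \<and>
               is_glb_in (Vplus iV le) (leV iV le) u1 u2 (minV iV le u1 u2) \<and>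
               (\<forall>v. leV iV le v u1 \<and> leV iV le v u2 \<longrightarrow> leV iV le v (minV iV le u1 u2))))"
proof -
  interpret strictly_convex_ordered_space "leV iV le"
    using ordered_gradient_space_induced_order[OF assms] .
  have P: "Vplus iV le = positive_cone" and Z: "Vzero iV le = below_positive"
    unfolding Vplus_def Vzero_def positive_cone_def below_positive_def by simp_all
  have max: "maxV iV le = least_norm_upper_bound" and min: "minV iV le = nearest_lower_bound"
    unfolding maxV_def minV_def least_norm_upper_bound_def nearest_lower_bound_def
    by (simp_all add: fun_eq_iff)
  have "is_lub_in positive_cone (leV iV le) u1 u2 (least_norm_upper_bound u1 u2) \<and>
      (\<forall>v. leV iV le u1 v \<and> leV iV le u2 v \<longrightarrow> leV iV le (least_norm_upper_bound u1 u2) v) \<and>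
      is_glb_in positive_cone (leV iV le) u1 u2 (nearest_lower_bound u1 u2) \<and>
      (\<forall>v. leV iV le v u1 \<and> leV iV le v u2 \<longrightarrow> leV iV le v (nearest_lower_bound u1 u2))"
    if "is_lattice positive_cone (leV iV le)" "u1 \<in> positive_cone" "u2 \<in> positive_cone"
    for u1 u2
  proof -
    note bounds = positive_cone_lub_glb_in_UNIV[OF that]
    show ?thesis
      using is_lub_in_subset[OF bounds(1) subset_UNIV bounds(3)]
        is_glb_in_subset[OF bounds(2) subset_UNIV bounds(4)] bounds(1,2)
      unfolding is_lub_in_def[of UNIV] is_glb_in_def[of UNIV] by blast
  qed
  then show ?thesis
    unfolding P Z max min using lattice_below_positive_iff by blast
qed

end
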